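(* Let $n\le -1$ be an odd integer with $3\nmid n$. Then the reductions modulo $3$ of $g_n$ and its derivative $g_n'=dg_n/dv$ have no common factor in $\mathbb{F}_3[v]$; that is, $g_n$ is squarefree modulo $3$.
   Context: Let $a=v^2+v-1$ and $B=(v^2-1)(v^2-v-1)$. For odd $n\le -1$ with $k=(1-n)/2$, define $g_n$ by $g_n=\big[(a+b)^k-(a-b)^k-(a+b)^{k+2}+(a-b)^{k+2}\big]/b$, where $b$ is a formal square root of $B$; the expression is a polynomial in $a$ and $b^2=B$, hence $g_n\in\mathbb{Z}[v]$. *)

theory Defs
  imports "HOL-Computational_Algebra.Polynomial" "Berlekamp_Zassenhaus.Finite_Field"
begin

text \<open>A type with exactly three elements; GF(3) is then the type three mod_ring.\<close>
typedef three = "{0::nat..<3}" by (rule exI[of _ 0]) simp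

lemma card_three: "CARD(three) = 3"
  using type_definition.card[OF type_definition_three] by simp

instance three :: finite
proof
  show "finite (UNIV :: three set)"
    using card_three card.infinite by fastforce
qed

instance three :: prime_card
  by standard (simp add: card_three)

type_synonym F3 = "three mod_ring"

definition g_a :: "int poly" where
  "g_a = [:-1, 1, 1:]"

definition g_B :: "int poly" where
  "g_B = [:-1, 0, 1:] * [:-1, -1, 1:]"

text \<open>D m = ((a+b)^m - (a-b)^m) / b, written out via the binomial theorem with b^2 = B:
  only odd powers b^i survive, each twice, and b^i / b = B^(i div 2).\<close>
definition g_D :: "nat \<Rightarrow> int poly" where
  "g_D m = (\<Sum>i\<in>{0..m}. if odd i
              then smult (2 * of_nat (m choose i)) (g_a ^ (m - i) * g_B ^ (i div 2))
              else 0)"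

text \<open>g_n for odd n \<le> -1, with k = (1 - n)/2:
  g_n = [(a+b)^k - (a-b)^k - (a+b)^(k+2) + (a-b)^(k+2)] / b.\<close>
definition g_poly :: "int \<Rightarrow> int poly" where
  "g_poly n = (let k = nat ((1 - n) div 2) in g_D k - g_D (k + 2))"

definition reduce3 :: "int poly \<Rightarrow> F3 poly" where
  "reduce3 p = map_poly of_int p"

end

theory Submission
  imports Defs
begin

text \<open>
  Over \<open>\<int>\<close>, \<open>D\<^sub>m = ((a+b)\<^sup>m - (a-b)\<^sup>m)/b\<close> equals \<open>2 U\<^sub>m\<close>,
  where \<open>U\<close> is the Lucas sequence with parameters \<open>P = 2a\<close>, \<open>Q = a\<^sup>2 - B\<close>; and
  \<open>g\<^sub>n = D\<^sub>k - D\<^sub>k\<^sub>+\<^sub>2\<close> with \<open>k = (1-n)/2\<close>.  Modulo 3 we have \<open>2 = -1\<close> and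
  \<open>a\<^sup>2 - B = v\<^sup>2\<close>, so \<open>g\<^sub>n \<equiv> -E\<^sub>k\<close> with \<open>E\<^sub>k = L\<^sub>k - L\<^sub>k\<^sub>+\<^sub>2\<close>, where \<open>L\<close> is the Lucas
  sequence with \<open>P = -a\<close>, \<open>Q = v\<^sup>2\<close> over \<open>\<bbbF>\<^sub>3[v]\<close>.  The hypotheses on \<open>n\<close> say
  exactly \<open>k \<ge> 1\<close> and \<open>k mod 3 \<noteq> 2\<close>.  Writing \<open>s = L\<^sub>k\<close>, \<open>t = L\<^sub>k\<^sub>+\<^sub>1\<close>:
  (1) \<open>L\<close> satisfies a first-order differential relation, so \<open>vBE' - vB'E\<close> is an explicit
      linear combination \<open>W\<close> of \<open>s, t\<close> whose coefficients depend only on \<open>k mod 3\<close>;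
  (2) explicit Bezout identities put \<open>N s\<close> and \<open>N t\<close> into the ideal \<open>(E, W)\<close>,
      where \<open>N = v(v+1)\<^sup>3(v-1)\<^sup>3\<close>;
  (3) the Cassini identity \<open>t\<^sup>2 + a s t + v\<^sup>2 s\<^sup>2 = v\<^sup>2\<^sup>k\<close> then shows that every common
      divisor of \<open>E\<close> and \<open>E'\<close> divides \<open>N v\<^sup>2\<^sup>k\<close>;
  (4) \<open>E'(0)\<close>, \<open>E(1)\<close>, \<open>E(-1)\<close> are nonzero, so such a divisor is a unit.
\<close>

fun lucasU :: "'a::comm_ring_1 \<Rightarrow> 'a \<Rightarrow> nat \<Rightarrow> 'a" where
  "lucasU P Q 0 = 0"
| "lucasU P Q (Suc 0) = 1"
| "lucasU P Q (Suc (Suc m)) = P * lucasU P Q (Suc m) - Q * lucasU P Q m"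

text \<open>Cassini's identity; it shows that consecutive terms generate an ideal containing \<open>Q\<^sup>m\<close>.\<close>

lemma lucasU_cassini:
  "lucasU P Q (Suc m) ^ 2 - P * lucasU P Q m * lucasU P Q (Suc m) + Q * lucasU P Q m ^ 2 = Q ^ m"
proof (induction m)
  case 0
  show ?case by simp
next
  case (Suc m)
  have "lucasU P Q (Suc (Suc m)) ^ 2 - P * lucasU P Q (Suc m) * lucasU P Q (Suc (Suc m))
          + Q * lucasU P Q (Suc m) ^ 2
      = Q * (lucasU P Q (Suc m) ^ 2 - P * lucasU P Q m * lucasU P Q (Suc m) + Q * lucasU P Q m ^ 2)"
    by (simp add: algebra_simps power2_eq_square)
  then show ?case using Suc by simp
qed

lemma (in comm_ring_hom) hom_lucasU: "hom (lucasU P Q m) = lucasU (hom P) (hom Q) m"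
  by (induction P Q m rule: lucasU.induct) (simp_all add: hom_distribs)

lemma lucasU_antiperiodic:
  assumes "P ^ 2 = 1"
  shows "lucasU P 1 (m + 3) = - P * lucasU P 1 m"
proof -
  have "lucasU P 1 (m + 3) = (P ^ 2 - 1) * lucasU P 1 (Suc m) - P * lucasU P 1 m"
    by (simp add: numeral_3_eq_3 algebra_simps power2_eq_square)
  then show ?thesis using assms by simp
qed

lemma lucasU_mod3:
  assumes "P ^ 2 = 1"
  shows "lucasU P 1 m = (- P) ^ (m div 3) * lucasU P 1 (m mod 3)"
proof -
  have "lucasU P 1 (3 * j + r) = (- P) ^ j * lucasU P 1 r" for j r
  proof (induction j)
    case (Suc j)
    have "lucasU P 1 (3 * Suc j + r) = - P * lucasU P 1 (3 * j + r)"
      using lucasU_antiperiodic[OF assms, of "3 * j + r"] by (simp add: add_ac)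
    then show ?case using Suc by simp
  qed simp
  from this[of "m div 3" "m mod 3"] show ?thesis by simp
qed

lemma g_D_times_sqrt:
  fixes x :: real
  assumes pos: "0 \<le> poly (of_int_poly g_B) x"
  defines "\<alpha> \<equiv> poly (of_int_poly g_a) x" and "\<beta> \<equiv> sqrt (poly (of_int_poly g_B) x)"
  shows "poly (of_int_poly (g_D m)) x * \<beta> = (\<alpha> + \<beta>) ^ m - (\<alpha> - \<beta>) ^ m"
proof -
  have bb: "poly (of_int_poly g_B) x = \<beta> ^ 2" using pos by (simp add: \<beta>_def)
  have D: "poly (of_int_poly (g_D m)) x
      = (\<Sum>i\<le>m. if odd i then 2 * of_nat (m choose i) * \<alpha> ^ (m - i) * (\<beta> ^ 2) ^ (i div 2) else 0)"
    unfolding g_D_def of_int_poly_hom.hom_sum poly_sum atLeast0AtMost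
    by (rule sum.cong[OF refl]) (simp add: hom_distribs bb \<alpha>_def)
  have plus: "(\<alpha> + \<beta>) ^ m = (\<Sum>i\<le>m. of_nat (m choose i) * \<beta> ^ i * \<alpha> ^ (m - i))"
    using binomial_ring[of \<beta> \<alpha> m] by (simp add: add.commute)
  have minus: "(\<alpha> - \<beta>) ^ m = (\<Sum>i\<le>m. of_nat (m choose i) * (- \<beta>) ^ i * \<alpha> ^ (m - i))"
    using binomial_ring[of "- \<beta>" \<alpha> m] by simp
  have term_eq: "(if odd i then 2 * of_nat (m choose i) * \<alpha> ^ (m - i) * (\<beta> ^ 2) ^ (i div 2) else 0) * \<beta>
      = of_nat (m choose i) * \<beta> ^ i * \<alpha> ^ (m - i) - of_nat (m choose i) * (- \<beta>) ^ i * \<alpha> ^ (m - i)"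
    for i
  proof (cases "odd i")
    case True
    then obtain j where j: "i = 2 * j + 1" by (metis oddE)
    have "\<beta> ^ i = (\<beta> ^ 2) ^ (i div 2) * \<beta>" unfolding j by (simp add: power_mult)
    then show ?thesis using True by (simp add: algebra_simps)
  qed simp
  show ?thesis
    unfolding D plus minus sum_distrib_right sum_subtractf[symmetric] using term_eq by simp
qed

lemma g_B_pos: "2 \<le> x \<Longrightarrow> 0 < poly (of_int_poly g_B) (x :: real)"
proof -
  assume x: "2 \<le> x"
  have "2 * x \<le> x * x" using mult_right_mono[OF x, of x] x by simp
  then have "0 < x * x - 1" and "0 < x * x - x - 1" using x by linarith+
  then have "0 < (x * x - 1) * (x * x - x - 1)" by simp
  then show ?thesis by (simp add: g_B_def hom_distribs algebra_simps)
qed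

lemma int_poly_eq_0_if_real_roots:
  fixes p :: "int poly"
  assumes "\<And>x::real. c \<le> x \<Longrightarrow> poly (of_int_poly p) x = 0"
  shows "p = 0"
proof -
  have "{c..} \<subseteq> {x. poly (of_int_poly p) x = (0::real)}" using assms by auto
  then have "\<not> finite {x. poly (of_int_poly p) x = (0::real)}"
    using infinite_Ici finite_subset by blast
  then have "(of_int_poly p :: real poly) = 0" using poly_roots_finite by blast
  then show "p = 0" by simp
qed

text \<open>Hence \<open>g_D\<close> satisfies the Lucas recurrence with \<open>P = 2a\<close>, \<open>Q = a\<^sup>2 - B\<close>, being
  an integer identity that holds at every real point \<open>x \<ge> 2\<close> (where \<open>\<beta> > 0\<close>).\<close>

lemma g_D_recurrence: "g_D (Suc (Suc m)) = smult 2 g_a * g_D (Suc m) - (g_a ^ 2 - g_B) * g_D m"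
proof -
  have "g_D (Suc (Suc m)) - (smult 2 g_a * g_D (Suc m) - (g_a ^ 2 - g_B) * g_D m) = 0"
  proof (rule int_poly_eq_0_if_real_roots)
    fix x :: real assume x: "2 \<le> x"
    define \<alpha> where "\<alpha> = poly (of_int_poly g_a) x"
    define \<beta> where "\<beta> = sqrt (poly (of_int_poly g_B) x)"
    define F where "F k = poly (of_int_poly (g_D k)) x" for k
    have pos: "0 < poly (of_int_poly g_B) x" using g_B_pos[OF x] .
    then have "\<beta> \<noteq> 0" and bb: "poly (of_int_poly g_B) x = \<beta> ^ 2" by (simp_all add: \<beta>_def)
    have F: "F k * \<beta> = (\<alpha> + \<beta>) ^ k - (\<alpha> - \<beta>) ^ k" for k
      using g_D_times_sqrt[of x k] pos by (simp add: F_def \<alpha>_def \<beta>_def)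
    have "(F (Suc (Suc m)) - (2 * \<alpha> * F (Suc m) - (\<alpha> ^ 2 - \<beta> ^ 2) * F m)) * \<beta>
       = F (Suc (Suc m)) * \<beta> - 2 * \<alpha> * (F (Suc m) * \<beta>) + (\<alpha> ^ 2 - \<beta> ^ 2) * (F m * \<beta>)"
      by (simp add: algebra_simps)
    also have "\<dots> = 0" unfolding F by (simp add: algebra_simps power2_eq_square)
    finally show "poly (of_int_poly (g_D (Suc (Suc m))
        - (smult 2 g_a * g_D (Suc m) - (g_a ^ 2 - g_B) * g_D m))) x = 0"
      using \<open>\<beta> \<noteq> 0\<close> by (simp add: hom_distribs F_def \<alpha>_def bb)
  qed
  then show ?thesis by simp
qed

lemma g_D_lucasU: "g_D m = smult 2 (lucasU (smult 2 g_a) (g_a ^ 2 - g_B) m)"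
proof (induction "smult 2 g_a" "g_a ^ 2 - g_B" m rule: lucasU.induct)
  case 1
  show ?case by (simp add: g_D_def)
next
  case 2
  show ?case by (simp add: g_D_def atLeast0AtMost atMost_Suc)
next
  case (3 m)
  then show ?case
    by (simp only: g_D_recurrence lucasU.simps smult_diff_right mult_smult_right)
qed

lemma F3_three: "(3 :: F3) = 0"
  using of_nat_card_eq_0[where 'a = three] by (simp add: card_three)

lemma F3_two: "(2 :: F3) = -1"
  using F3_three by (simp add: eq_neg_iff_add_eq_0[symmetric])

lemma F3_poly_of_nat_mod3: "(of_nat k :: F3 poly) = of_nat (k mod 3)"
proof -
  have "(of_nat k :: F3 poly) = of_nat (3 * (k div 3) + k mod 3)" by simp
  also have "\<dots> = [:of_nat 3:] * of_nat (k div 3) + of_nat (k mod 3)"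
    by (simp only: of_nat_add of_nat_mult of_nat_poly[of 3])
  finally show ?thesis using F3_three by simp
qed

text \<open>An identity in \<open>\<bbbF>\<^sub>3[v]\<close> may be certified by exhibiting the error term as a multiple of 3;
  all explicit polynomial identities below are checked this way.\<close>

lemma F3_poly_mod3: "x = y + 3 * w \<Longrightarrow> x = (y :: F3 poly)"
  using F3_three by (simp add: numeral_poly)

definition v3 :: "F3 poly" where "v3 = [:0, 1:]"

definition a3 :: "F3 poly" where "a3 = v3 * v3 + v3 - 1"

definition L3 :: "nat \<Rightarrow> F3 poly" where "L3 = lucasU (- a3) (v3 * v3)"

lemma reduce3_g_a: "reduce3 g_a = a3"
  by (simp add: reduce3_def g_a_def a3_def v3_def one_pCons)

lemma reduce3_disc: "reduce3 (g_a ^ 2 - g_B) = v3 * v3"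
proof -
  have "g_a ^ 2 - g_B = [:0, -3, 1, 3:]" by (simp add: g_a_def g_B_def power2_eq_square)
  then show ?thesis using F3_three by (simp add: reduce3_def v3_def)
qed

lemma reduce3_g_D: "reduce3 (g_D m) = - L3 m"
proof -
  have "reduce3 (g_D m) = smult 2 (lucasU (smult 2 (reduce3 g_a)) (reduce3 (g_a ^ 2 - g_B)) m)"
    unfolding g_D_lucasU reduce3_def by (simp add: hom_distribs of_int_poly_hom.hom_lucasU)
  then show ?thesis by (simp add: reduce3_g_a reduce3_disc F3_two L3_def)
qed

text \<open>Data for the differential relation of \<open>L\<close>: \<open>B\<close> mod 3, the coefficients \<open>R\<^sub>s\<close>, \<open>R\<^sub>t\<close>,
  the recurrence step \<open>(s, t) \<mapsto> -a t - v\<^sup>2 s\<close>, and the combination \<open>W\<close> of step (1).\<close>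

definition B3 :: "F3 poly" where "B3 = (v3 * v3 - 1) * (v3 * v3 - v3 - 1)"

definition rs3 :: "F3 poly" where "rs3 = v3 * v3 + a3 * a3 + v3 * a3 * pderiv a3"

definition rt3 :: "F3 poly" where "rt3 = a3 - v3 * pderiv a3"

definition nxt3 :: "F3 poly \<Rightarrow> F3 poly \<Rightarrow> F3 poly" where "nxt3 s t = - a3 * t - v3 * v3 * s"

definition wr3 :: "F3 poly \<Rightarrow> F3 poly \<Rightarrow> F3 poly \<Rightarrow> F3 poly" where
  "wr3 M s t = (M + 2) * (rs3 * nxt3 s t + rt3 * nxt3 t (nxt3 s t)) - M * (rs3 * s + rt3 * t)"

lemma pderiv_v3 [simp]: "pderiv v3 = 1"
  by (simp add: v3_def pderiv_pCons)

lemma pderiv_a3: "pderiv a3 = 2 * v3 + 1"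
  by (simp add: a3_def pderiv_add pderiv_diff pderiv_mult algebra_simps)

lemma pderiv_B3: "pderiv B3 = 2 * v3 * (v3 * v3 - v3 - 1) + (v3 * v3 - 1) * (2 * v3 - 1)"
  by (simp add: B3_def pderiv_add pderiv_diff pderiv_mult algebra_simps)

lemma L3_Suc_Suc: "L3 (Suc (Suc m)) = nxt3 (L3 m) (L3 (Suc m))"
  by (simp add: L3_def nxt3_def)

lemma pderiv_nxt3:
  "pderiv (nxt3 s t) = - pderiv a3 * t - a3 * pderiv t - 2 * v3 * s - v3 * v3 * pderiv s"
  by (simp add: nxt3_def pderiv_add pderiv_diff pderiv_mult pderiv_minus algebra_simps)

text \<open>The differential relation is preserved by one step of the recurrence \<dots>\<close>

lemma deriv_step_identity:
  "- v3 * B3 * pderiv a3 * t - a3 * (v3 * pderiv B3 * t - (M + 1) * (rs3 * t + rt3 * nxt3 s t))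
     - 2 * v3 * v3 * B3 * s - v3 * v3 * (v3 * pderiv B3 * s - M * (rs3 * s + rt3 * t))
   = v3 * pderiv B3 * nxt3 s t - (M + 2) * (rs3 * nxt3 s t + rt3 * nxt3 t (nxt3 s t))"
  apply (rule F3_poly_mod3[where w="- v3*t - v3*v3*s + 3*v3*v3*v3*t + v3*v3*v3*s + 2*v3*v3*v3*v3*t
      + 2*v3*v3*v3*v3*s - 3*v3*v3*v3*v3*v3*t - 3*v3*v3*v3*v3*v3*s
      - 2*v3*v3*v3*v3*v3*v3*t - 3*v3*v3*v3*v3*v3*v3*s"])
  unfolding nxt3_def rs3_def rt3_def pderiv_a3 pderiv_B3
  unfolding a3_def B3_def by (simp add: algebra_simps)

text \<open>\<dots> and holds for \<open>L\<^sub>1 = 1\<close>.\<close>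

lemma deriv_base_identity: "v3 * pderiv B3 = rs3 - rt3 * a3"
  apply (rule F3_poly_mod3[where w="v3 - v3*v3 - 3*v3*v3*v3"])
  unfolding rs3_def rt3_def pderiv_a3 pderiv_B3
  unfolding a3_def B3_def by (simp add: algebra_simps)

lemma L3_deriv:
  "v3 * B3 * pderiv (L3 m) = v3 * pderiv B3 * L3 m - of_nat m * (rs3 * L3 m + rt3 * L3 (Suc m))"
  unfolding L3_def
proof (induction "- a3" "v3 * v3" m rule: lucasU.induct)
  case 1
  show ?case by simp
next
  case 2
  show ?case using deriv_base_identity by (simp add: algebra_simps)
next
  case (3 m)
  define s where "s = lucasU (- a3) (v3 * v3) m"
  define t where "t = lucasU (- a3) (v3 * v3) (Suc m)"
  have next_st: "lucasU (- a3) (v3 * v3) (Suc (Suc m)) = nxt3 s t"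
    and next_tu: "lucasU (- a3) (v3 * v3) (Suc (Suc (Suc m))) = nxt3 t (nxt3 s t)"
    by (simp_all add: s_def t_def nxt3_def)
  have IH_s: "v3 * B3 * pderiv s = v3 * pderiv B3 * s - of_nat m * (rs3 * s + rt3 * t)"
    using "3.hyps"(2) by (simp add: s_def t_def)
  have IH_t: "v3 * B3 * pderiv t = v3 * pderiv B3 * t - (of_nat m + 1) * (rs3 * t + rt3 * nxt3 s t)"
    using "3.hyps"(1) next_st by (simp add: s_def t_def)
  have "v3 * B3 * pderiv (nxt3 s t) = - v3 * B3 * pderiv a3 * t - a3 * (v3 * B3 * pderiv t)
      - 2 * v3 * v3 * B3 * s - v3 * v3 * (v3 * B3 * pderiv s)"
    unfolding pderiv_nxt3 by (simp add: algebra_simps)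
  also have "\<dots> = v3 * pderiv B3 * nxt3 s t
      - (of_nat m + 2) * (rs3 * nxt3 s t + rt3 * nxt3 t (nxt3 s t))"
    unfolding IH_s IH_t by (rule deriv_step_identity)
  finally show ?case unfolding next_st next_tu by (simp add: add_ac)
qed

text \<open>The reduction of \<open>g\<^sub>n\<close> up to sign.\<close>

definition E3 :: "nat \<Rightarrow> F3 poly" where "E3 k = L3 k - L3 (Suc (Suc k))"

lemma E3_nxt3: "E3 k = L3 k - nxt3 (L3 k) (L3 (Suc k))"
  by (simp add: E3_def L3_Suc_Suc)

lemma E3_wronskian:
  "v3 * B3 * pderiv (E3 k) - v3 * pderiv B3 * E3 k = wr3 (of_nat k) (L3 k) (L3 (Suc k))"
proof -
  have "v3 * B3 * pderiv (E3 k) - v3 * pderiv B3 * E3 k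
      = (v3 * B3 * pderiv (L3 k) - v3 * pderiv B3 * L3 k)
        - (v3 * B3 * pderiv (L3 (Suc (Suc k))) - v3 * pderiv B3 * L3 (Suc (Suc k)))"
    by (simp add: E3_def pderiv_diff algebra_simps)
  also have "\<dots> = wr3 (of_nat k) (L3 k) (L3 (Suc k))"
    unfolding L3_deriv[of k] L3_deriv[of "Suc (Suc k)"] by (simp add: wr3_def L3_Suc_Suc algebra_simps)
  finally show ?thesis .
qed

lemma bezout_k0:
  fixes s t :: "F3 poly"
  shows "v3 * ((v3 + 1) ^ 3 * (v3 - 1)) * s
      = (- v3 + v3*v3 + v3*v3*v3*v3*v3 + v3*v3*v3*v3*v3*v3) * (s - nxt3 s t) - a3 * wr3 0 s t"
    and "v3 * ((v3 + 1) ^ 3 * (v3 - 1)) * t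
      = (- v3*v3*v3 + v3*v3*v3*v3 - v3*v3*v3*v3*v3*v3) * (s - nxt3 s t) + (1 + v3*v3) * wr3 0 s t"
  subgoal by (rule F3_poly_mod3[where w="v3*t - 2*v3*v3*t - v3*v3*s - 6*v3*v3*v3*t - v3*v3*v3*s + 7*v3*v3*v3*v3*t
      + v3*v3*v3*v3*s + 13*v3*v3*v3*v3*v3*t + 6*v3*v3*v3*v3*v3*s
      - 4*v3*v3*v3*v3*v3*v3*t - v3*v3*v3*v3*v3*v3*s - 10*v3*v3*v3*v3*v3*v3*v3*t
      - 7*v3*v3*v3*v3*v3*v3*v3*s - 3*v3*v3*v3*v3*v3*v3*v3*v3*t
      - 3*v3*v3*v3*v3*v3*v3*v3*v3*s"])
      (unfold wr3_def nxt3_def rs3_def rt3_def pderiv_a3, unfold a3_def, simp add: algebra_simps power3_eq_cube)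
  subgoal by (rule F3_poly_mod3[where w="v3*t - 2*v3*v3*t - 5*v3*v3*v3*t - v3*v3*v3*s - v3*v3*v3*v3*s + v3*v3*v3*v3*v3*t
      + 3*v3*v3*v3*v3*v3*s + 2*v3*v3*v3*v3*v3*v3*t + 2*v3*v3*v3*v3*v3*v3*s
      + 7*v3*v3*v3*v3*v3*v3*v3*t + 4*v3*v3*v3*v3*v3*v3*v3*s
      + 3*v3*v3*v3*v3*v3*v3*v3*v3*t + 3*v3*v3*v3*v3*v3*v3*v3*v3*s"])
      (unfold wr3_def nxt3_def rs3_def rt3_def pderiv_a3, unfold a3_def, simp add: algebra_simps power3_eq_cube)
  done

lemma bezout_k1:
  fixes s t :: "F3 poly"
  shows "v3 * (- ((v3 + 1) * (v3 - 1) ^ 3)) * s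
      = (1 + v3*v3) * (s - nxt3 s t) - a3 * wr3 1 s t"
    and "v3 * (- ((v3 + 1) * (v3 - 1) ^ 3)) * t
      = (1 - v3*v3 - v3*v3*v3) * (s - nxt3 s t) + (1 + v3*v3) * wr3 1 s t"
  subgoal by (rule F3_poly_mod3[where w="2*v3*t - v3*s - 4*v3*v3*t - v3*v3*s - 9*v3*v3*v3*t + v3*v3*v3*s
      + 11*v3*v3*v3*v3*t + v3*v3*v3*v3*s + 19*v3*v3*v3*v3*v3*t + 6*v3*v3*v3*v3*v3*s
      - 6*v3*v3*v3*v3*v3*v3*t - 2*v3*v3*v3*v3*v3*v3*s - 14*v3*v3*v3*v3*v3*v3*v3*t
      - 10*v3*v3*v3*v3*v3*v3*v3*s - 4*v3*v3*v3*v3*v3*v3*v3*v3*t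
      - 4*v3*v3*v3*v3*v3*v3*v3*v3*s"])
      (unfold wr3_def nxt3_def rs3_def rt3_def pderiv_a3, unfold a3_def, simp add: algebra_simps power3_eq_cube)
  subgoal by (rule F3_poly_mod3[where w="2*v3*t - v3*s - 4*v3*v3*t - 7*v3*v3*v3*t - v3*v3*v3*s - v3*v3*v3*v3*t
      + v3*v3*v3*v3*v3*t + 6*v3*v3*v3*v3*v3*s + 4*v3*v3*v3*v3*v3*v3*t
      + 4*v3*v3*v3*v3*v3*v3*s + 10*v3*v3*v3*v3*v3*v3*v3*t + 6*v3*v3*v3*v3*v3*v3*v3*s
      + 4*v3*v3*v3*v3*v3*v3*v3*v3*t + 4*v3*v3*v3*v3*v3*v3*v3*v3*s"])
      (unfold wr3_def nxt3_def rs3_def rt3_def pderiv_a3, unfold a3_def, simp add: algebra_simps power3_eq_cube)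
  done

text \<open>Consequently a common divisor of \<open>E\<close> and \<open>W\<close> divides \<open>N s\<close> and \<open>N t\<close>
  (the two cases differ by the factors \<open>(v-1)\<^sup>2\<close> resp. \<open>-(v+1)\<^sup>2\<close>).\<close>

lemma divisor_divides_s_t:
  fixes r s t :: "F3 poly"
  assumes k: "k mod 3 \<noteq> 2" and rE: "r dvd s - nxt3 s t" and rW: "r dvd wr3 (of_nat k) s t"
  shows "r dvd v3 * ((v3 + 1) ^ 3 * (v3 - 1) ^ 3) * s \<and> r dvd v3 * ((v3 + 1) ^ 3 * (v3 - 1) ^ 3) * t"
proof -
  consider "k mod 3 = 0" | "k mod 3 = 1" using k by linarith
  then show ?thesis
  proof cases
    case 1
    then have "(of_nat k :: F3 poly) = 0" using F3_poly_of_nat_mod3[of k] by simp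
    then have rW0: "r dvd wr3 0 s t" using rW by simp
    have "r dvd v3 * ((v3 + 1) ^ 3 * (v3 - 1)) * s" "r dvd v3 * ((v3 + 1) ^ 3 * (v3 - 1)) * t"
      unfolding bezout_k0[where s = s and t = t] by (meson dvd_add dvd_diff dvd_mult rE rW0)+
    moreover have "v3 * ((v3 + 1) ^ 3 * (v3 - 1) ^ 3) * x = v3 * ((v3 + 1) ^ 3 * (v3 - 1)) * x * (v3 - 1) ^ 2"
      for x by (simp add: power2_eq_square power3_eq_cube ac_simps)
    ultimately show ?thesis by (metis dvd_mult2)
  next
    case 2
    then have "(of_nat k :: F3 poly) = 1" using F3_poly_of_nat_mod3[of k] by simp
    then have rW1: "r dvd wr3 1 s t" using rW by simp
    have "r dvd v3 * (- ((v3 + 1) * (v3 - 1) ^ 3)) * s" "r dvd v3 * (- ((v3 + 1) * (v3 - 1) ^ 3)) * t"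
      unfolding bezout_k1[where s = s and t = t] by (meson dvd_add dvd_diff dvd_mult rE rW1)+
    moreover have "v3 * ((v3 + 1) ^ 3 * (v3 - 1) ^ 3) * x = v3 * (- ((v3 + 1) * (v3 - 1) ^ 3)) * x * (- ((v3 + 1) ^ 2))"
      for x by (simp add: power2_eq_square power3_eq_cube ac_simps)
    ultimately show ?thesis by (metis dvd_mult2)
  qed
qed

text \<open>Evaluating \<open>L\<close> at a point gives a Lucas sequence over \<open>\<bbbF>\<^sub>3\<close>; at \<open>\<plusminus>1\<close> its
  parameters are \<open>P = \<mp>1\<close>, \<open>Q = 1\<close>, so the sequence has period 3 up to sign.\<close>

lemma poly_L3: "poly (L3 m) c = lucasU (- poly a3 c) (c * c) m"
  unfolding L3_def by (simp add: poly_hom.hom_lucasU v3_def)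

lemma E3_at_1: "k mod 3 \<noteq> 2 \<Longrightarrow> poly (E3 k) 1 \<noteq> 0"
proof -
  assume k: "k mod 3 \<noteq> 2"
  have L: "poly (L3 m) 1 = lucasU (-1) 1 (m mod 3)" for m
    using lucasU_mod3[of "-1 :: F3" m] by (simp add: poly_L3 a3_def v3_def)
  have k2: "Suc (Suc k) mod 3 = (if k mod 3 = 0 then 2 else 0)" and k1: "k mod 3 \<noteq> 0 \<Longrightarrow> k mod 3 = 1"
    using k by presburger+
  have "poly (E3 k) 1 = lucasU (-1) 1 (k mod 3) - lucasU (-1) 1 (Suc (Suc k) mod 3)"
    by (simp add: E3_def L)
  also have "\<dots> = 1"
    unfolding k2 by (cases "k mod 3 = 0") (simp_all add: k1 numeral_2_eq_2)
  finally show ?thesis by simp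
qed

lemma E3_at_minus_1: "k mod 3 \<noteq> 2 \<Longrightarrow> poly (E3 k) (-1) \<noteq> 0"
proof -
  assume k: "k mod 3 \<noteq> 2"
  have L: "poly (L3 m) (-1) = (-1) ^ (m div 3) * lucasU 1 1 (m mod 3)" for m
    using lucasU_mod3[of "1 :: F3" m] by (simp add: poly_L3 a3_def v3_def)
  consider "k mod 3 = 0" | "k mod 3 = 1" using k by linarith
  then have "poly (E3 k) (-1) = (-1) ^ (k div 3) \<or> poly (E3 k) (-1) = - ((-1) ^ (k div 3))"
  proof cases
    case 1
    then have "Suc (Suc k) div 3 = k div 3" "Suc (Suc k) mod 3 = 2" by presburger+
    then show ?thesis using 1 by (simp add: E3_def L numeral_2_eq_2)
  next
    case 2
    then have "Suc (Suc k) mod 3 = 0" by presburger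
    then show ?thesis using 2 by (simp add: E3_def L)
  qed
  then show ?thesis by auto
qed

text \<open>At \<open>v = 0\<close>: \<open>L\<^sub>m\<^sub>+\<^sub>1(0) = 1\<close> and \<open>L'\<^sub>m\<^sub>+\<^sub>1(0) = -m\<close>, hence \<open>E'\<^sub>k(0) = 2 \<noteq> 0\<close>.\<close>

lemma L3_at_0: "poly (L3 (Suc m)) 0 = 1 \<and> poly (pderiv (L3 (Suc m))) 0 = - of_nat m"
proof (induction m)
  case 0
  show ?case by (simp add: L3_def)
next
  case (Suc m)
  have a0: "poly a3 0 = -1" by (simp add: a3_def v3_def)
  have da0: "poly (pderiv a3) 0 = 1" by (simp add: pderiv_a3 v3_def)
  have "poly (L3 (Suc (Suc m))) 0 = - poly a3 0 * poly (L3 (Suc m)) 0"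
    by (simp add: L3_Suc_Suc nxt3_def v3_def)
  moreover have "poly (pderiv (L3 (Suc (Suc m)))) 0
      = - poly (pderiv a3) 0 * poly (L3 (Suc m)) 0 - poly a3 0 * poly (pderiv (L3 (Suc m))) 0"
    by (simp add: L3_Suc_Suc pderiv_nxt3 v3_def)
  ultimately show ?case using Suc a0 da0 by simp
qed

lemma pderiv_E3_at_0: "1 \<le> k \<Longrightarrow> poly (pderiv (E3 k)) 0 \<noteq> 0"
proof -
  assume "1 \<le> k"
  then obtain j where k: "k = Suc j" by (cases k) auto
  have "poly (pderiv (E3 k)) 0 = - of_nat j + of_nat (Suc (Suc j))"
    using L3_at_0[of j] L3_at_0[of "Suc (Suc j)"] by (simp add: E3_def k pderiv_diff)
  also have "\<dots> = -1" by (simp add: F3_two)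
  finally show ?thesis by simp
qed

lemma coprime_linear_if_divides_nonroot:
  fixes p r :: "'a :: field_gcd poly"
  assumes "poly p c \<noteq> 0" and "r dvd p"
  shows "coprime r [:-c, 1:]"
proof -
  have "prime_elem [:-c, 1:]" by (rule prime_elem_linear_field_poly) simp
  moreover have "\<not> [:-c, 1:] dvd r" using assms poly_eq_0_iff_dvd dvd_trans by blast
  ultimately have "coprime [:-c, 1:] r" by (rule prime_elem_imp_coprime)
  then show ?thesis by (simp add: coprime_commute)
qed

lemma E3_squarefree:
  assumes "1 \<le> k" and k: "k mod 3 \<noteq> 2"
  shows "coprime (E3 k) (pderiv (E3 k))"
proof (rule coprimeI)
  fix r assume rE: "r dvd E3 k" and rD: "r dvd pderiv (E3 k)"
  define s where "s = L3 k"
  define t where "t = L3 (Suc k)"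
  define N where "N = v3 * ((v3 + 1) ^ 3 * (v3 - 1) ^ 3)"
  have "r dvd v3 * B3 * pderiv (E3 k) - v3 * pderiv B3 * E3 k"
    using rD rE by (intro dvd_diff dvd_mult)
  then have rW: "r dvd wr3 (of_nat k) s t" unfolding E3_wronskian s_def t_def .
  have "r dvd s - nxt3 s t" using rE unfolding s_def t_def E3_nxt3 .
  from this rW have "r dvd N * s \<and> r dvd N * t"
    unfolding N_def by (rule divisor_divides_s_t[OF k])
  then have rs: "r dvd N * s" and rt: "r dvd N * t" by auto
  have cassini: "t ^ 2 - (- a3) * s * t + v3 * v3 * s ^ 2 = (v3 * v3) ^ k"
    using lucasU_cassini[of "- a3" "v3 * v3" k] unfolding s_def t_def L3_def .
  have "N * (v3 * v3) ^ k = (N * t) * t + (a3 * t) * (N * s) + (v3 * v3 * s) * (N * s)"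
    unfolding cassini[symmetric] by (simp add: algebra_simps power2_eq_square)
  then have "r dvd N * (v3 * v3) ^ k"
    using dvd_add[OF dvd_add[OF dvd_mult2[OF rt] dvd_mult[OF rs]] dvd_mult[OF rs]] by simp
  moreover have "coprime r (N * (v3 * v3) ^ k)"
  proof -
    have "coprime r v3"
      using coprime_linear_if_divides_nonroot[OF pderiv_E3_at_0[OF \<open>1 \<le> k\<close>] rD] by (simp add: v3_def)
    moreover have "coprime r (v3 + 1)"
      using coprime_linear_if_divides_nonroot[OF E3_at_minus_1[OF k] rE] by (simp add: v3_def one_pCons)
    moreover have "coprime r (v3 - 1)"
      using coprime_linear_if_divides_nonroot[OF E3_at_1[OF k] rE] by (simp add: v3_def one_pCons)
    ultimately show ?thesis by (simp add: N_def)
  qed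
  ultimately show "is_unit r" by (metis coprime_common_divisor dvd_refl)
qed

theorem proposition5p7:
  fixes n :: int
  assumes "n \<le> -1" and "odd n" and "\<not> (3 dvd n)"
  shows "coprime (reduce3 (g_poly n)) (reduce3 (pderiv (g_poly n)))"
proof -
  define k where "k = nat ((1 - n) div 2)"
  have "int k = (1 - n) div 2" using assms(1) by (simp add: k_def)
  then have "1 \<le> k" and "k mod 3 \<noteq> 2" using assms by presburger+
  have g: "g_poly n = g_D k - g_D (Suc (Suc k))" by (simp add: g_poly_def k_def Let_def)
  have red: "reduce3 (g_poly n) = - E3 k"
    unfolding g E3_def reduce3_def by (simp add: hom_distribs reduce3_g_D[unfolded reduce3_def])
  have "reduce3 (pderiv (g_poly n)) = - pderiv (E3 k)"
    using red unfolding reduce3_def by (simp add: of_int_hom.map_poly_pderiv pderiv_minus)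
  with red E3_squarefree[OF \<open>1 \<le> k\<close> \<open>k mod 3 \<noteq> 2\<close>] show ?thesis by simp
qed

end
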